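(* Let $p$ be an odd prime. A metric $p$-group $(A,q)$ is reductive if and only if it is either isotropically generated or anisotropic.
   Context: $k$ is algebraically closed of characteristic $0$. A metric group $(A,q)$ is a finite Abelian group with a non-degenerate quadratic form $q:A\to k^\times$; a metric $p$-group if $A$ is a $p$-group. $x$ is isotropic if $q(x)=1$, a subgroup $H$ is isotropic if $q|_H=1$; $(A,q)$ is isotropically generated if $A$ is generated by isotropic elements; anisotropic if $q(x)\ne1$ for $x\ne0$; reductive if the intersection of its maximal isotropic subgroups is trivial. *)

theory Defs
  imports "HOL-Algebra.Algebra" "HOL-Computational_Algebra.Polynomial"
begin

definition alg_closed :: "'k::field itself \<Rightarrow> bool" where
  "alg_closed _ \<longleftrightarrow> (\<forall>f::'k poly. degree f \<ge> 1 \<longrightarrow> (\<exists>x. poly f x = 0))"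

text \<open>Associated symmetric form b(x,y) = q(x+y)/(q(x)q(y)) (group written multiplicatively).\<close>
definition assoc_bichar :: "('a, 'b) monoid_scheme \<Rightarrow> ('a \<Rightarrow> 'k::field) \<Rightarrow> 'a \<Rightarrow> 'a \<Rightarrow> 'k" where
  "assoc_bichar G q x y = q (x \<otimes>\<^bsub>G\<^esub> y) / (q x * q y)"

definition quadratic_form :: "('a, 'b) monoid_scheme \<Rightarrow> ('a \<Rightarrow> 'k::field) \<Rightarrow> bool" where
  "quadratic_form G q \<longleftrightarrow>
     (\<forall>x\<in>carrier G. q x \<noteq> 0) \<and>
     (\<forall>x\<in>carrier G. q (inv\<^bsub>G\<^esub> x) = q x) \<and>
     (\<forall>x\<in>carrier G. \<forall>y\<in>carrier G. \<forall>z\<in>carrier G.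
        assoc_bichar G q (x \<otimes>\<^bsub>G\<^esub> y) z = assoc_bichar G q x z * assoc_bichar G q y z)"

definition nondegenerate :: "('a, 'b) monoid_scheme \<Rightarrow> ('a \<Rightarrow> 'k::field) \<Rightarrow> bool" where
  "nondegenerate G q \<longleftrightarrow>
     (\<forall>x\<in>carrier G. (\<forall>y\<in>carrier G. assoc_bichar G q x y = 1) \<longrightarrow> x = \<one>\<^bsub>G\<^esub>)"

definition metric_group :: "('a, 'b) monoid_scheme \<Rightarrow> ('a \<Rightarrow> 'k::field) \<Rightarrow> bool" where
  "metric_group G q \<longleftrightarrow> comm_group G \<and> finite (carrier G) \<and> quadratic_form G q \<and> nondegenerate G q"

definition metric_p_group :: "nat \<Rightarrow> ('a, 'b) monoid_scheme \<Rightarrow> ('a \<Rightarrow> 'k::field) \<Rightarrow> bool" where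
  "metric_p_group p G q \<longleftrightarrow> metric_group G q \<and> (\<exists>n. card (carrier G) = p ^ n)"

definition isotropic_subgroup :: "('a, 'b) monoid_scheme \<Rightarrow> ('a \<Rightarrow> 'k::field) \<Rightarrow> 'a set \<Rightarrow> bool" where
  "isotropic_subgroup G q H \<longleftrightarrow> subgroup H G \<and> (\<forall>x\<in>H. q x = 1)"

definition maximal_isotropic :: "('a, 'b) monoid_scheme \<Rightarrow> ('a \<Rightarrow> 'k::field) \<Rightarrow> 'a set \<Rightarrow> bool" where
  "maximal_isotropic G q H \<longleftrightarrow> isotropic_subgroup G q H \<and>
     (\<forall>K. isotropic_subgroup G q K \<and> H \<subseteq> K \<longrightarrow> K = H)"

definition reductive :: "('a, 'b) monoid_scheme \<Rightarrow> ('a \<Rightarrow> 'k::field) \<Rightarrow> bool" where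
  "reductive G q \<longleftrightarrow> \<Inter>{H. maximal_isotropic G q H} = {\<one>\<^bsub>G\<^esub>}"

definition isotropically_generated :: "('a, 'b) monoid_scheme \<Rightarrow> ('a \<Rightarrow> 'k::field) \<Rightarrow> bool" where
  "isotropically_generated G q \<longleftrightarrow> generate G {x\<in>carrier G. q x = 1} = carrier G"

definition anisotropic :: "('a, 'b) monoid_scheme \<Rightarrow> ('a \<Rightarrow> 'k::field) \<Rightarrow> bool" where
  "anisotropic G q \<longleftrightarrow> (\<forall>x\<in>carrier G. x \<noteq> \<one>\<^bsub>G\<^esub> \<longrightarrow> q x \<noteq> 1)"

end

theory Submission
  imports Defs
begin

text \<open>Write b for the bicharacter of q and I for the set of isotropic elements. In a finite
  quadratic group the intersection of all maximal isotropic subgroups is the isotropic radical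
  {z \<in> I. b(z, I) = 1}: every isotropic y lies in a maximal isotropic subgroup, and an isotropic
  element orthogonal to a maximal isotropic subgroup belongs to it. Hence anisotropic groups, and
  by nondegeneracy isotropically generated ones, are reductive.

  Conversely, let the radical be trivial, let y0 \<noteq> 1 be isotropic, and let x lie outside the
  subgroup generated by I, so that q(x w) \<noteq> 1 for all w in it. All values of q and b are p-power
  roots of unity, and such a root of order dividing p^j is a power of any root of order at least
  p^j. Say q(x) has order p^j. Then b(x, y)^(p^(j-1)) = 1 for every isotropic y, since otherwise
  q(x)^-1 = b(x, y)^c and w = y^c would give q(x w) = 1. For j \<ge> 2 this puts x^(p^(j-1)) into
  the radical, so it is trivial and q(x) has smaller order. For j = 1 choose an isotropic y with
  b(y0, y) \<noteq> 1 and c with b(y0, y)^c = q(x)^-1; then w = y0^c y satisfies q(w) = q(x)^-1 and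
  b(x, w) = 1, again a contradiction. So q(x) = 1, which is absurd. Neither the algebraic
  closedness nor the characteristic of k plays a role.\<close>

lemma
  assumes "m \<ge> 1"
  shows field_finite_roots_unity: "finite {z::'k::field. z ^ m = 1}"
    and field_card_roots_unity: "card {z::'k::field. z ^ m = 1} \<le> m"
proof -
  let ?P = "monom (1::'k) m - 1"
  have deg: "degree ?P = m"
    using assms
    by (subst diff_conv_add_uminus, subst degree_add_eq_left) (auto simp: degree_monom_eq)
  then have nonzero: "?P \<noteq> 0"
    using assms by auto
  have roots: "{z::'k. z ^ m = 1} = {z. poly ?P z = 0}"
    by (simp add: poly_monom)
  show "finite {z::'k. z ^ m = 1}" "card {z::'k. z ^ m = 1} \<le> m"
    unfolding roots using poly_roots_finite[OF nonzero] card_poly_roots_bound[OF nonzero] deg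
    by simp_all
qed

lemma power_gcd_eq_1:
  fixes z :: "'k::field"
  assumes "z ^ a = 1" "z ^ b = 1" "a \<noteq> 0"
  shows "z ^ gcd a b = 1"
proof -
  obtain x y where "a * x = b * y + gcd a b"
    using bezout_nat[OF assms(3)] by blast
  then have "(z ^ a) ^ x = (z ^ b) ^ y * z ^ gcd a b"
    by (simp flip: power_mult power_add)
  then show ?thesis
    using assms by simp
qed

lemma prime_power_roots_unity_eq_powers:
  fixes \<beta> :: "'k::field"
  assumes p: "Factorial_Ring.prime p" and "j \<ge> 1"
    and order: "\<beta> ^ (p ^ j) = 1" "\<beta> ^ (p ^ (j - 1)) \<noteq> 1"
  shows "{z. z ^ (p ^ j) = 1} = (\<lambda>c. \<beta> ^ c) ` {..<p ^ j}"
proof -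
  have p0: "p > 0"
    using prime_gt_0_nat[OF p] .
  have no_smaller_period: "\<beta> ^ d \<noteq> 1" if "0 < d" "d < p ^ j" for d
  proof
    assume "\<beta> ^ d = 1"
    then have "\<beta> ^ gcd (p ^ j) d = 1"
      using power_gcd_eq_1[OF order(1)] p0 by simp
    moreover obtain i where "i \<le> j" and gcd_eq: "gcd (p ^ j) d = p ^ i"
      using divides_primepow_nat[OF p, of "gcd (p ^ j) d" j] by auto
    moreover have "i \<noteq> j"
      using that gcd_eq gcd_le2_nat[of d "p ^ j"] by auto
    ultimately have "p ^ i dvd p ^ (j - 1)"
      by (intro le_imp_power_dvd) simp
    then show False
      using order(2) \<open>\<beta> ^ gcd (p ^ j) d = 1\<close> gcd_eq by (auto elim!: dvdE simp: power_mult)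
  qed
  have "\<beta> \<noteq> 0"
    using order(1) p0 by (auto simp: power_0_left)
  have "inj_on (\<lambda>c. \<beta> ^ c) {..<p ^ j}"
  proof (rule linorder_inj_onI', rule notI)
    fix a c assume "a \<in> {..<p ^ j}" "c \<in> {..<p ^ j}" "a < c" "\<beta> ^ a = \<beta> ^ c"
    then have "\<beta> ^ a * \<beta> ^ (c - a) = \<beta> ^ a * 1"
      using power_add[of \<beta> a "c - a"] by simp
    then have "\<beta> ^ (c - a) = 1"
      using \<open>\<beta> \<noteq> 0\<close> by simp
    then show False
      using no_smaller_period \<open>a < c\<close> \<open>c \<in> {..<p ^ j}\<close> by simp
  qed
  then have card_powers: "card ((\<lambda>c. \<beta> ^ c) ` {..<p ^ j}) = p ^ j"
    by (simp add: card_image)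
  have powers_sub: "(\<lambda>c. \<beta> ^ c) ` {..<p ^ j} \<subseteq> {z. z ^ (p ^ j) = 1}"
    using order(1) by (auto simp flip: power_mult simp: mult.commute[of _ "p ^ j"] power_mult)
  have "p ^ j \<ge> 1"
    using p0 by simp
  then show ?thesis
    using card_seteq[OF field_finite_roots_unity powers_sub] field_card_roots_unity card_powers
    by auto
qed

lemma prime_power_root_unity_in_powers:
  fixes \<beta> \<gamma> :: "'k::field"
  assumes p: "Factorial_Ring.prime p" and "j \<ge> 1"
    and "\<beta> ^ (p ^ n) = 1" and \<beta>_order: "\<beta> ^ (p ^ (j - 1)) \<noteq> 1"
    and \<gamma>: "\<gamma> ^ (p ^ j) = 1"
  shows "\<exists>c. \<gamma> = \<beta> ^ c"
proof -
  obtain i where i: "\<beta> ^ (p ^ i) = 1" and least: "\<forall>k<i. \<beta> ^ (p ^ k) \<noteq> 1"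
    using exists_least_iff[of "\<lambda>i. \<beta> ^ (p ^ i) = 1"] \<open>\<beta> ^ (p ^ n) = 1\<close> by blast
  have "j \<le> i"
  proof (rule ccontr)
    assume "\<not> j \<le> i"
    then have "p ^ i dvd p ^ (j - 1)"
      by (intro le_imp_power_dvd) simp
    then show False
      using i \<beta>_order by (auto elim!: dvdE simp: power_mult)
  qed
  define \<beta>' where "\<beta>' = \<beta> ^ (p ^ (i - j))"
  have "\<beta>' ^ (p ^ j) = \<beta> ^ (p ^ i)" "\<beta>' ^ (p ^ (j - 1)) = \<beta> ^ (p ^ (i - 1))"
    using \<open>j \<le> i\<close> \<open>j \<ge> 1\<close> unfolding \<beta>'_def by (simp_all flip: power_mult power_add)
  moreover have "i - 1 < i"
    using \<open>j \<le> i\<close> \<open>j \<ge> 1\<close> by simp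
  ultimately have "\<gamma> \<in> (\<lambda>c. \<beta>' ^ c) ` {..<p ^ j}"
    using prime_power_roots_unity_eq_powers[OF p \<open>j \<ge> 1\<close>, of \<beta>'] i least \<gamma> by auto
  then show ?thesis
    unfolding \<beta>'_def by (auto simp flip: power_mult)
qed

locale quadratic_group = comm_group G for G (structure) +
  fixes q :: "'a \<Rightarrow> 'k::field"
  assumes quadratic_form: "quadratic_form G q"
begin

abbreviation bichar :: "'a \<Rightarrow> 'a \<Rightarrow> 'k" where
  "bichar \<equiv> assoc_bichar G q"

abbreviation isotropics :: "'a set" where
  "isotropics \<equiv> {x \<in> carrier G. q x = 1}"

lemma q_nonzero: "x \<in> carrier G \<Longrightarrow> q x \<noteq> 0"
  using quadratic_form unfolding quadratic_form_def by blast

lemma q_inv: "x \<in> carrier G \<Longrightarrow> q (inv x) = q x"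
  using quadratic_form unfolding quadratic_form_def by blast

lemma bichar_mult_left:
  "\<lbrakk>x \<in> carrier G; y \<in> carrier G; z \<in> carrier G\<rbrakk> \<Longrightarrow> bichar (x \<otimes> y) z = bichar x z * bichar y z"
  using quadratic_form unfolding quadratic_form_def by blast

lemma bichar_commute: "\<lbrakk>x \<in> carrier G; y \<in> carrier G\<rbrakk> \<Longrightarrow> bichar x y = bichar y x"
  unfolding assoc_bichar_def by (simp add: m_comm mult.commute)

lemma bichar_mult_right:
  "\<lbrakk>x \<in> carrier G; y \<in> carrier G; z \<in> carrier G\<rbrakk> \<Longrightarrow> bichar z (x \<otimes> y) = bichar z x * bichar z y"
  using bichar_mult_left bichar_commute by simp

lemma q_mult: "\<lbrakk>x \<in> carrier G; y \<in> carrier G\<rbrakk> \<Longrightarrow> q (x \<otimes> y) = q x * q y * bichar x y"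
  using q_nonzero unfolding assoc_bichar_def by simp

lemma bichar_nonzero: "\<lbrakk>x \<in> carrier G; y \<in> carrier G\<rbrakk> \<Longrightarrow> bichar x y \<noteq> 0"
  using q_nonzero unfolding assoc_bichar_def by simp

lemma bichar_one_left [simp]: "z \<in> carrier G \<Longrightarrow> bichar \<one> z = 1"
  using bichar_mult_left[of \<one> \<one> z] bichar_nonzero[of \<one> z] by simp

lemma q_one [simp]: "q \<one> = 1"
  using bichar_one_left[of \<one>] q_nonzero[of \<one>] unfolding assoc_bichar_def by (simp add: field_simps)

lemma bichar_inv_left: "\<lbrakk>x \<in> carrier G; z \<in> carrier G\<rbrakk> \<Longrightarrow> bichar (inv x) z = inverse (bichar x z)"
  using bichar_mult_left[of "inv x" x z] bichar_nonzero[of x z] by (simp add: field_simps)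

lemma bichar_self:
  assumes x: "x \<in> carrier G"
  shows "bichar x x = q x ^ 2"
proof -
  have "inverse (bichar x x) = bichar x (inv x)"
    using bichar_inv_left[OF x x] bichar_commute[of "inv x" x] x by simp
  also have "\<dots> = inverse (q x ^ 2)"
    using x q_inv unfolding assoc_bichar_def by (simp add: power2_eq_square field_simps)
  finally show ?thesis
    by simp
qed

lemma bichar_pow_left:
  "\<lbrakk>x \<in> carrier G; z \<in> carrier G\<rbrakk> \<Longrightarrow> bichar (x [^] (n::nat)) z = bichar x z ^ n"
  by (induction n) (simp_all add: bichar_mult_left flip: nat_pow_mult)

lemma bichar_pow_right:
  "\<lbrakk>x \<in> carrier G; z \<in> carrier G\<rbrakk> \<Longrightarrow> bichar z (x [^] (n::nat)) = bichar z x ^ n"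
  using bichar_pow_left bichar_commute by simp

lemma q_pow: "x \<in> carrier G \<Longrightarrow> q (x [^] (n::nat)) = q x ^ (n * n)"
proof (induction n)
  case (Suc n)
  have "q (x [^] Suc n) = q x ^ (n * n) * q x * (q x ^ 2) ^ n"
    using Suc q_mult[of "x [^] n" x] bichar_pow_left bichar_self by simp
  also have "\<dots> = q x ^ (n * n + 1 + 2 * n)"
    by (simp only: power_add power_mult power_one_right)
  also have "n * n + 1 + 2 * n = Suc n * Suc n"
    by simp
  finally show ?case .
qed simp

text \<open>Since gcd m 2 = 1, no assumption on the characteristic of k is needed.\<close>
lemma q_pow_eq_1_if_odd_order:
  assumes x: "x \<in> carrier G" and "x [^] m = \<one>" "odd m"
  shows "q x ^ m = 1"
proof -
  have "(q x ^ m) ^ 2 = 1"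
    using bichar_pow_left[OF x x, of m] bichar_self[OF x] assms
    by (simp flip: power_mult add: mult.commute)
  moreover have "(q x ^ m) ^ m = 1"
    using q_pow[OF x, of m] assms by (simp flip: power_mult)
  moreover have "gcd m 2 = 1"
    using \<open>odd m\<close> by (simp add: odd_iff_mod_2_eq_one gcd_non_0_nat)
  ultimately show ?thesis
    using power_gcd_eq_1[of "q x ^ m" m 2] \<open>odd m\<close> by auto
qed

lemma subgroup_bichar_eq_1: "z \<in> carrier G \<Longrightarrow> subgroup {k \<in> carrier G. bichar z k = 1} G"
  by (rule subgroupI)
    (auto simp: bichar_mult_right bichar_commute[of z] bichar_inv_left intro!: exI[of _ \<one>])

lemma bichar_eq_1_on_generate:
  assumes "S \<subseteq> carrier G" "z \<in> carrier G" "\<forall>s\<in>S. bichar z s = 1" "k \<in> generate G S"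
  shows "bichar z k = 1"
  using generate_subgroup_incl[OF _ subgroup_bichar_eq_1] assms by blast

lemma isotropic_subgroup_generate:
  assumes S: "S \<subseteq> carrier G" and isotropic: "\<forall>s\<in>S. q s = 1"
    and orthogonal: "\<forall>s\<in>S. \<forall>t\<in>S. bichar s t = 1"
  shows "isotropic_subgroup G q (generate G S)"
proof -
  have gen_carrier: "generate G S \<subseteq> carrier G"
    using generate_incl[OF S] .
  have "bichar k s = 1" if "k \<in> generate G S" "s \<in> S" for k s
    using bichar_eq_1_on_generate[OF S _ _ that(1), of s] bichar_commute[of s k] orthogonal
      that gen_carrier S by auto
  then have gen_orthogonal: "bichar k k' = 1" if "k \<in> generate G S" "k' \<in> generate G S" for k k'
    using bichar_eq_1_on_generate[OF S _ _ that(2), of k] that gen_carrier by blast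
  have "q k = 1" if "k \<in> generate G S" for k
    using that
  proof (induction rule: generate.induct)
    case (inv h)
    then show ?case using isotropic q_inv[of h] S by auto
  next
    case (eng h1 h2)
    then show ?case using q_mult[of h1 h2] gen_orthogonal[of h1 h2] gen_carrier by auto
  qed (use isotropic in simp_all)
  then show ?thesis
    unfolding isotropic_subgroup_def using generate_is_subgroup[OF S] by blast
qed

lemma isotropic_subgroup_bichar:
  assumes H: "isotropic_subgroup G q H" and "x \<in> H" "y \<in> H"
  shows "bichar x y = 1"
proof -
  have "subgroup H G"
    using H unfolding isotropic_subgroup_def by blast
  then have "x \<in> carrier G" "y \<in> carrier G" "x \<otimes> y \<in> H"
    using \<open>x \<in> H\<close> \<open>y \<in> H\<close> by (auto intro: subgroup.m_closed dest: subgroup.mem_carrier)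
  moreover have "q x = 1" "q y = 1" "q (x \<otimes> y) = 1"
    using H \<open>x \<in> H\<close> \<open>y \<in> H\<close> \<open>x \<otimes> y \<in> H\<close> unfolding isotropic_subgroup_def by blast+
  ultimately show ?thesis
    using q_mult[of x y] by simp
qed

lemma maximal_isotropic_subset: "maximal_isotropic G q M \<Longrightarrow> M \<subseteq> isotropics"
  unfolding maximal_isotropic_def isotropic_subgroup_def using subgroup.subset by blast

lemma maximal_isotropic_exists:
  assumes "finite (carrier G)" and H: "isotropic_subgroup G q H"
  shows "\<exists>M. maximal_isotropic G q M \<and> H \<subseteq> M"
proof -
  let ?A = "{K. isotropic_subgroup G q K \<and> H \<subseteq> K}"
  have "?A \<subseteq> Pow (carrier G)"
    unfolding isotropic_subgroup_def using subgroup.subset by blast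
  then have "finite ?A"
    using assms(1) finite_subset by blast
  then obtain M where "M \<in> ?A" "\<forall>K\<in>?A. M \<subseteq> K \<longrightarrow> M = K"
    using finite_has_maximal2[of ?A H] H by blast
  then show ?thesis
    unfolding maximal_isotropic_def by blast
qed

lemma maximal_isotropic_memI:
  assumes M: "maximal_isotropic G q M" and x: "x \<in> isotropics"
    and orthogonal: "\<forall>h\<in>M. bichar x h = 1"
  shows "x \<in> M"
proof -
  have M_isotropics: "M \<subseteq> isotropics"
    using maximal_isotropic_subset[OF M] .
  have M_orthogonal: "bichar s t = 1" if "s \<in> M" "t \<in> M" for s t
    using M that isotropic_subgroup_bichar unfolding maximal_isotropic_def by blast
  have "bichar s t = 1" if st: "s \<in> insert x M" "t \<in> insert x M" for s t
  proof -
    consider "s = x" "t = x" | "s = x" "t \<in> M" | "s \<in> M" "t = x" | "s \<in> M" "t \<in> M"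
      using st by blast
    then show ?thesis
      using x orthogonal M_orthogonal bichar_self[of x] bichar_commute[of x s] M_isotropics
      by cases auto
  qed
  then have "isotropic_subgroup G q (generate G (insert x M))"
    using isotropic_subgroup_generate[of "insert x M"] M_isotropics x by blast
  moreover have "M \<subseteq> generate G (insert x M)"
    using generate.incl[of _ "insert x M" G] by blast
  ultimately have "generate G (insert x M) = M"
    using M unfolding maximal_isotropic_def by blast
  then show ?thesis
    using generate.incl[of x "insert x M" G] by blast
qed

definition isotropic_radical :: "'a set" where
  "isotropic_radical = {z \<in> isotropics. \<forall>y\<in>isotropics. bichar z y = 1}"

lemma one_in_isotropic_radical: "\<one> \<in> isotropic_radical"
  unfolding isotropic_radical_def by simp

lemma Inter_maximal_isotropic:
  assumes "finite (carrier G)"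
  shows "\<Inter>{M. maximal_isotropic G q M} = isotropic_radical"
proof
  show "\<Inter>{M. maximal_isotropic G q M} \<subseteq> isotropic_radical"
  proof
    fix z assume z: "z \<in> \<Inter>{M. maximal_isotropic G q M}"
    have "isotropic_subgroup G q {\<one>}"
      unfolding isotropic_subgroup_def using triv_subgroup by simp
    then have "z \<in> isotropics"
      using maximal_isotropic_exists[OF assms] maximal_isotropic_subset z by blast
    moreover have "bichar z y = 1" if y: "y \<in> isotropics" for y
    proof -
      have "isotropic_subgroup G q (generate G {y})"
        using isotropic_subgroup_generate[of "{y}"] y bichar_self by simp
      then obtain M where "maximal_isotropic G q M" "y \<in> M"
        using maximal_isotropic_exists[OF assms] generate.incl[of y "{y}" G] by blast
      then show ?thesis
        using z isotropic_subgroup_bichar unfolding maximal_isotropic_def by blast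
    qed
    ultimately show "z \<in> isotropic_radical"
      unfolding isotropic_radical_def by blast
  qed
next
  show "isotropic_radical \<subseteq> \<Inter>{M. maximal_isotropic G q M}"
    using maximal_isotropic_memI maximal_isotropic_subset unfolding isotropic_radical_def by blast
qed

lemma reductive_iff_isotropic_radical:
  "finite (carrier G) \<Longrightarrow> reductive G q \<longleftrightarrow> isotropic_radical = {\<one>}"
  unfolding reductive_def using Inter_maximal_isotropic by simp

lemma reductive_if_anisotropic:
  assumes "finite (carrier G)" "anisotropic G q"
  shows "reductive G q"
  using assms one_in_isotropic_radical
  unfolding reductive_iff_isotropic_radical[OF assms(1)] anisotropic_def isotropic_radical_def
  by blast

lemma reductive_if_isotropically_generated:
  assumes "finite (carrier G)" "nondegenerate G q" "isotropically_generated G q"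
  shows "reductive G q"
proof -
  have "z = \<one>" if "z \<in> isotropic_radical" for z
    using that bichar_eq_1_on_generate[of isotropics z] assms(2,3)
    unfolding isotropic_radical_def isotropically_generated_def nondegenerate_def by auto
  then show ?thesis
    using one_in_isotropic_radical reductive_iff_isotropic_radical[OF assms(1)] by blast
qed

lemma q_mult_ne_1_outside_generate:
  assumes "x \<in> carrier G" "x \<notin> generate G isotropics" "w \<in> generate G isotropics"
  shows "q (x \<otimes> w) \<noteq> 1"
proof
  have w: "w \<in> carrier G"
    using assms(3) generate_incl[of isotropics] by blast
  assume "q (x \<otimes> w) = 1"
  then have "x \<otimes> w \<in> generate G isotropics"
    using assms(1) w by (blast intro: generate.incl)
  moreover have "subgroup (generate G isotropics) G"
    by (rule generate_is_subgroup) blast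
  ultimately have "(x \<otimes> w) \<otimes> inv w \<in> generate G isotropics"
    using assms(3) by (metis subgroup.m_closed subgroup.m_inv_closed)
  then show False
    using assms(1,2) w by (simp add: m_assoc)
qed

end

locale quadratic_p_group = quadratic_group +
  fixes p n :: nat
  assumes prime: "Factorial_Ring.prime p" and odd: "odd p"
    and card_carrier: "card (carrier G) = p ^ n"
begin

lemma finite_carrier: "finite (carrier G)"
  using card_carrier prime_gt_0_nat[OF prime] card.infinite by fastforce

lemma pow_card_eq_1: "x \<in> carrier G \<Longrightarrow> x [^] (p ^ n) = \<one>"
  using pow_order_eq_1 card_carrier unfolding Coset.order_def by simp

lemma bichar_pow_card: "\<lbrakk>x \<in> carrier G; y \<in> carrier G\<rbrakk> \<Longrightarrow> bichar x y ^ (p ^ n) = 1"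
  using bichar_pow_left[of x y "p ^ n"] pow_card_eq_1 by simp

lemma q_pow_card: "x \<in> carrier G \<Longrightarrow> q x ^ (p ^ n) = 1"
  using q_pow_eq_1_if_odd_order pow_card_eq_1 odd by simp

lemma bichar_pow_eq_1_outside_generate:
  assumes x: "x \<in> carrier G" "x \<notin> generate G isotropics"
    and "j \<ge> 1" "q x ^ (p ^ j) = 1" and y: "y \<in> isotropics"
  shows "bichar x y ^ (p ^ (j - 1)) = 1"
proof (rule ccontr)
  assume "bichar x y ^ (p ^ (j - 1)) \<noteq> 1"
  moreover have "inverse (q x) ^ (p ^ j) = 1"
    using \<open>q x ^ (p ^ j) = 1\<close> by (simp add: power_inverse)
  ultimately obtain c where c: "inverse (q x) = bichar x y ^ c"
    using prime_power_root_unity_in_powers[OF prime \<open>j \<ge> 1\<close> bichar_pow_card] x y by blast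
  have "y [^] c \<in> isotropics"
    using y q_pow by simp
  moreover have "q (x \<otimes> y [^] c) = 1"
    using x y q_mult[of x "y [^] c"] q_pow bichar_pow_right c[symmetric] q_nonzero by simp
  ultimately show False
    using q_mult_ne_1_outside_generate x by (blast intro: generate.incl)
qed

lemma q_pow_prime_ne_1_outside_generate:
  assumes radical: "isotropic_radical = {\<one>}" and y0: "y0 \<in> isotropics" "y0 \<noteq> \<one>"
    and x: "x \<in> carrier G" "x \<notin> generate G isotropics"
  shows "q x ^ p \<noteq> 1"
proof
  assume "q x ^ p = 1"
  then have x_orthogonal: "bichar x y = 1" if "y \<in> isotropics" for y
    using bichar_pow_eq_1_outside_generate[OF x, of 1] that by simp
  obtain y where y: "y \<in> isotropics" "bichar y0 y \<noteq> 1"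
    using radical y0 unfolding isotropic_radical_def by blast
  have "inverse (q x) ^ (p ^ 1) = 1"
    using \<open>q x ^ p = 1\<close> by (simp add: power_inverse)
  then obtain c where c: "inverse (q x) = bichar y0 y ^ c"
    using prime_power_root_unity_in_powers[OF prime _ bichar_pow_card, of 1 y0 y] y y0 by auto
  define w where "w = y0 [^] c \<otimes> y"
  have "y0 [^] c \<in> isotropics"
    using y0 q_pow by simp
  then have "w \<in> generate G isotropics"
    unfolding w_def using y by (blast intro: generate.incl generate.eng)
  moreover have "q w = inverse (q x)"
    unfolding w_def using y y0 q_mult[of "y0 [^] c" y] q_pow bichar_pow_left c by simp
  moreover have "bichar x w = 1"
    unfolding w_def using x y y0 bichar_mult_right bichar_pow_right x_orthogonal by simp
  ultimately show False
    using q_mult_ne_1_outside_generate[OF x] q_mult[of x w] q_nonzero x generate_incl[of isotropics]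
    by auto
qed

lemma q_pow_prime_power_descent_outside_generate:
  assumes radical: "isotropic_radical = {\<one>}"
    and x: "x \<in> carrier G" "x \<notin> generate G isotropics"
    and "j \<ge> 2" and "q x ^ (p ^ j) = 1"
  shows "q x ^ (p ^ (j - 1)) = 1"
proof -
  let ?x' = "x [^] (p ^ (j - 1))"
  have "(j - 1) + (j - 1) = j + (j - 2)"
    using \<open>j \<ge> 2\<close> by simp
  then have "p ^ (j - 1) * p ^ (j - 1) = p ^ j * p ^ (j - 2)"
    by (simp only: flip: power_add)
  then have "q ?x' = (q x ^ (p ^ j)) ^ (p ^ (j - 2))"
    using q_pow[OF x(1)] by (simp flip: power_mult)
  then have "q ?x' = 1"
    using \<open>q x ^ (p ^ j) = 1\<close> by simp
  moreover have "bichar ?x' y = 1" if "y \<in> isotropics" for y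
    using bichar_pow_left bichar_pow_eq_1_outside_generate[OF x] assms(4,5) that x by simp
  ultimately have "?x' = \<one>"
    using radical x unfolding isotropic_radical_def by blast
  then show ?thesis
    using q_pow_eq_1_if_odd_order[OF x(1)] odd by simp
qed

lemma isotropically_generated_if_reductive:
  assumes "reductive G q" "\<not> anisotropic G q"
  shows "isotropically_generated G q"
proof -
  have radical: "isotropic_radical = {\<one>}"
    using assms(1) reductive_iff_isotropic_radical finite_carrier by blast
  obtain y0 where y0: "y0 \<in> isotropics" "y0 \<noteq> \<one>"
    using assms(2) unfolding anisotropic_def by blast
  have "x \<in> generate G isotropics" if x: "x \<in> carrier G" for x
  proof (rule ccontr)
    assume outside: "x \<notin> generate G isotropics"
    have "q x ^ (p ^ Suc j) \<noteq> 1" for j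
    proof (induction j)
      case 0
      then show ?case
        using q_pow_prime_ne_1_outside_generate[OF radical y0 x outside] by simp
    next
      case (Suc j)
      then show ?case
        using q_pow_prime_power_descent_outside_generate[OF radical x outside, of "Suc (Suc j)"]
        by auto
    qed
    moreover have "q x \<noteq> 1"
      using x outside by (blast intro: generate.incl)
    ultimately show False
      using q_pow_card[OF x] by (cases n) auto
  qed
  then show ?thesis
    unfolding isotropically_generated_def using generate_incl[of isotropics] by blast
qed

end

theorem proposition6p7:
  fixes p :: nat and G :: "('a, 'b) monoid_scheme" and q :: "'a \<Rightarrow> 'k::field_char_0"
  assumes "alg_closed TYPE('k)"
    and "Factorial_Ring.prime p" and "odd p"
    and "metric_p_group p G q"
  shows "reductive G q \<longleftrightarrow> isotropically_generated G q \<or> anisotropic G q"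
proof -
  obtain n where "metric_group G q" and card: "card (carrier G) = p ^ n"
    using assms(4) unfolding metric_p_group_def by blast
  then have "comm_group G" "quadratic_form G q" and nondegenerate: "nondegenerate G q"
    unfolding metric_group_def by auto
  then interpret quadratic_p_group G q p n
    using assms(2,3) card
    by (simp add: quadratic_p_group_def quadratic_p_group_axioms_def quadratic_group_def
        quadratic_group_axioms_def)
  show ?thesis
    using reductive_if_anisotropic reductive_if_isotropically_generated
      isotropically_generated_if_reductive finite_carrier nondegenerate by blast
qed

end
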